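(* Let $n\ge 4$ and let $A=\{a_1,\dots,a_m\}$ with $a_1<a_2<\dots<a_m$, and let $s,t$ be any two distinct vertices of $QJ(n,A)$. (i) If $1\le a_1<\dots<a_m<n-1$, then for every $1\le i<m$ and any two distinct vertices $u,w$ of level $i$ (the copy of $J(n,a_i)$), there exist distinct vertices $u',w'$ of level $i+1$ (the copy of $J(n,a_{i+1})$), neither equal to $s$ or $t$, such that $u'$ is adjacent to $u$ and $w'$ is adjacent to $w$. (ii) If $1<a_1<\dots<a_m\le n-1$, then for every $1<i\le m$ and any two distinct vertices $u,w$ of level $i$, there exist distinct vertices $u',w'$ of level $i-1$, neither equal to $s$ or $t$, such that $u'$ is adjacent to $u$ and $w'$ is adjacent to $w$. (iii) If $A=\{1,n-1\}$, then any two distinct vertices of level 1 have distinct neighbours (respectively) in level 2 avoiding $\{s,t\}$, and any two distinct vertices of level 2 have distinct neighbours (respectively) in level 1 avoiding $\{s,t\}$.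
   Context: Let $[n]=\{1,\dots,n\}$. The Johnson graph $J(n,k)$ has as vertices the $k$-subsets of $[n]$, two being adjacent iff they share exactly $k-1$ elements. For a nonempty $A=\{a_1<a_2<\dots<a_m\}\subseteq[n]$, the graph $QJ(n,A)$ is formed by taking, for each $i$, a copy of $J(n,a_i)$ (called level $i$), and additionally joining a vertex $u$ of level $i$ to a vertex $v$ of level $i+1$ whenever $u\subseteq v$ (for $1\le i<m$); there are no other edges. *)

theory Defs
  imports Main
begin

text \<open>A is a nonempty subset of [n]; a_i is the i-th smallest element (1-indexed).\<close>
definition elemA :: "nat set \<Rightarrow> nat \<Rightarrow> nat" where
  "elemA A i = sorted_list_of_set A ! (i - 1)"

definition QJ_level :: "nat \<Rightarrow> nat set \<Rightarrow> nat \<Rightarrow> (nat \<times> nat set) set" where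
  "QJ_level n A i = {(i, S) | S. 1 \<le> i \<and> i \<le> card A \<and> S \<subseteq> {1..n} \<and> card S = elemA A i}"

definition QJ_verts :: "nat \<Rightarrow> nat set \<Rightarrow> (nat \<times> nat set) set" where
  "QJ_verts n A = (\<Union>i\<in>{1..card A}. QJ_level n A i)"

definition QJ_adj :: "nat \<Rightarrow> nat set \<Rightarrow> nat \<times> nat set \<Rightarrow> nat \<times> nat set \<Rightarrow> bool" where
  "QJ_adj n A u v \<longleftrightarrow> u \<in> QJ_verts n A \<and> v \<in> QJ_verts n A \<and>
     ((fst u = fst v \<and> card (snd u \<inter> snd v) = elemA A (fst u) - 1) \<or>
      (fst v = fst u + 1 \<and> snd u \<subseteq> snd v) \<or>
      (fst u = fst v + 1 \<and> snd v \<subseteq> snd u))"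

end

theory Submission
  imports Defs "HOL.Binomial_Plus"
begin

(* Between consecutive levels, the neighbours of a k-set U among the l-sets are its l-supersets
   (going up) or its l-subsets (going down). There are C(n-k, l-k) resp. C(k, l) of them, at least
   three under the hypotheses. Distinct vertices U, W have distinct neighbour families: for x in
   U - W, some l-superset of W misses x (as l < n), and some l-subset of U contains x (as l \<ge> 1).
   Finally, two distinct finite sets with at least three elements each have distinct representatives
   outside any two prescribed points; this is all that is used about s and t. *)

lemma two_distinct_elements_avoiding:
  assumes "finite X" "finite Y" "3 \<le> card X" "3 \<le> card Y" "X \<noteq> Y"
  shows "\<exists>x\<in>X. \<exists>y\<in>Y. x \<noteq> y \<and> x \<notin> {s, t} \<and> y \<notin> {s, t}"
proof -
  have outside: "Z - {s, t} \<noteq> {}" if "3 \<le> card Z" for Z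
  proof
    assume "Z - {s, t} = {}"
    then have "card Z \<le> card {s, t}" by (simp add: card_mono)
    also have "\<dots> \<le> 2" by (simp add: card_insert_if)
    finally show False using that by simp
  qed
  obtain x y where x: "x \<in> X - {s, t}" and y: "y \<in> Y - {s, t}"
    using outside[OF assms(3)] outside[OF assms(4)] by blast
  have other: "\<not> Z \<subseteq> {x, s, t}" if "finite Z" "3 \<le> card Z" "Z \<noteq> {x, s, t}" for Z
  proof
    assume "Z \<subseteq> {x, s, t}"
    moreover have "card {x, s, t} \<le> card Z" using that(2) by (simp add: card_insert_if)
    ultimately show False using that(3) card_seteq[of "{x, s, t}" Z] by simp
  qed
  show ?thesis
  proof (cases "x = y")
    case False
    with x y show ?thesis by blast
  next
    case True
    show ?thesis
    proof (cases "X = {x, s, t}")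
      case False
      then obtain x' where "x' \<in> X - {x, s, t}" using other[OF assms(1,3)] by blast
      with y \<open>x = y\<close> show ?thesis by blast
    next
      case True
      with assms(5) have "Y \<noteq> {x, s, t}" by simp
      then obtain y' where "y' \<in> Y - {s, t}" "x \<noteq> y'" using other[OF assms(2,4)] by blast
      with x show ?thesis by blast
    qed
  qed
qed

lemma card_supersets_of_card:
  assumes "finite S" "U \<subseteq> S" "card U \<le> l"
  shows "card {V. V \<subseteq> S \<and> card V = l \<and> U \<subseteq> V} = (card S - card U) choose (l - card U)"
proof -
  have fin: "finite U" using assms(1,2) finite_subset by blast
  have "bij_betw (\<lambda>D. U \<union> D) {D. D \<subseteq> S - U \<and> card D = l - card U}
      {V. V \<subseteq> S \<and> card V = l \<and> U \<subseteq> V}"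
  proof (rule bij_betw_byWitness[where f' = "\<lambda>V. V - U"])
    show "(\<lambda>D. U \<union> D) ` {D. D \<subseteq> S - U \<and> card D = l - card U} \<subseteq> {V. V \<subseteq> S \<and> card V = l \<and> U \<subseteq> V}"
    proof clarify
      fix D assume "D \<subseteq> S - U" "card D = l - card U"
      moreover have "finite D" using \<open>D \<subseteq> S - U\<close> assms(1) finite_subset by blast
      ultimately show "U \<union> D \<subseteq> S \<and> card (U \<union> D) = l \<and> U \<subseteq> U \<union> D"
        using assms(2,3) fin by (subst card_Un_disjoint) auto
    qed
    show "(\<lambda>V. V - U) ` {V. V \<subseteq> S \<and> card V = l \<and> U \<subseteq> V} \<subseteq> {D. D \<subseteq> S - U \<and> card D = l - card U}"
      using fin by (auto simp: card_Diff_subset)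
  qed auto
  then have "card {V. V \<subseteq> S \<and> card V = l \<and> U \<subseteq> V} = card {D. D \<subseteq> S - U \<and> card D = l - card U}"
    by (simp add: bij_betw_same_card)
  also have "\<dots> = card (S - U) choose (l - card U)"
    using assms(1) by (simp add: n_subsets)
  finally show ?thesis using assms(2) fin by (simp add: card_Diff_subset)
qed

lemma supersets_of_card_eq_imp_eq:
  assumes "finite S" "U \<subseteq> S" "W \<subseteq> S" "card U = card W" "card W \<le> l" "l < card S"
    and same: "{V. V \<subseteq> S \<and> card V = l \<and> U \<subseteq> V} = {V. V \<subseteq> S \<and> card V = l \<and> W \<subseteq> V}"
  shows "U = W"
proof (rule ccontr)
  assume "U \<noteq> W"
  have fin: "finite W" using assms(1,3) finite_subset by blast
  with assms(4) \<open>U \<noteq> W\<close> have "\<not> U \<subseteq> W" using card_subset_eq by blast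
  then obtain x where x: "x \<in> U" "x \<notin> W" by blast
  have "x \<in> S - W" using x assms(2) by blast
  then have "card (S - W - {x}) = card S - card W - 1"
    using assms(1,3) fin by (simp add: card_Diff_subset card_Diff_singleton)
  with assms(5,6) have "l - card W \<le> card (S - W - {x})" by linarith
  then obtain D where D: "D \<subseteq> S - W - {x}" "card D = l - card W" "finite D"
    by (rule obtain_subset_with_card_n)
  have "card (W \<union> D) = l"
    using D assms(5) fin by (subst card_Un_disjoint) auto
  with D assms(3) have "W \<union> D \<in> {V. V \<subseteq> S \<and> card V = l \<and> W \<subseteq> V}" by auto
  then have "U \<subseteq> W \<union> D" unfolding same[symmetric] by simp
  with x D(1) show False by blast
qed

lemma subsets_of_card_eq_imp_eq:
  assumes "finite W" "card U = card W" "1 \<le> k" "k \<le> card U"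
    and same: "{V. V \<subseteq> U \<and> card V = k} = {V. V \<subseteq> W \<and> card V = k}"
  shows "U = W"
proof (rule ccontr)
  assume "U \<noteq> W"
  with assms(1,2) have "\<not> U \<subseteq> W" using card_subset_eq by blast
  then obtain x where x: "x \<in> U" "x \<notin> W" by blast
  have "finite U" using assms(3,4) card.infinite by fastforce
  with x assms(3,4) have "k - 1 \<le> card (U - {x})" by simp
  then obtain D where D: "D \<subseteq> U - {x}" "card D = k - 1" "finite D"
    by (rule obtain_subset_with_card_n)
  have "x \<notin> D" using D(1) by blast
  with D assms(3) have "card (insert x D) = k" by simp
  with D x have "insert x D \<in> {V. V \<subseteq> U \<and> card V = k}" by blast
  then have "insert x D \<subseteq> W" unfolding same by simp
  with x show False by blast
qed

lemma elemA_strict_mono: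
  assumes "finite A" "1 \<le> i" "i < j" "j \<le> card A"
  shows "elemA A i < elemA A j"
  using assms sorted_wrt_nth_less[OF strict_sorted_list_of_set[of A], of "i - 1" "j - 1"]
  by (simp add: elemA_def)

lemma elemA_in:
  assumes "finite A" "1 \<le> i" "i \<le> card A"
  shows "elemA A i \<in> A"
  using assms nth_mem[of "i - 1" "sorted_list_of_set A"] by (simp add: elemA_def)

lemma mem_QJ_level:
  "(j, V) \<in> QJ_level n A i \<longleftrightarrow> j = i \<and> 1 \<le> i \<and> i \<le> card A \<and> V \<subseteq> {1..n} \<and> card V = elemA A i"
  by (auto simp: QJ_level_def)

lemma QJ_level_imp_verts: "x \<in> QJ_level n A i \<Longrightarrow> x \<in> QJ_verts n A"
  unfolding QJ_verts_def QJ_level_def by auto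

lemma QJ_adj_up:
  assumes "(i, U) \<in> QJ_level n A i" "(i + 1, V) \<in> QJ_level n A (i + 1)" "U \<subseteq> V"
  shows "QJ_adj n A (i, U) (i + 1, V)"
  using assms QJ_level_imp_verts unfolding QJ_adj_def by auto

lemma QJ_adj_down:
  assumes "1 < i" "(i, U) \<in> QJ_level n A i" "(i - 1, V) \<in> QJ_level n A (i - 1)" "V \<subseteq> U"
  shows "QJ_adj n A (i, U) (i - 1, V)"
  using assms QJ_level_imp_verts unfolding QJ_adj_def by auto

definition distinct_neighbours_avoiding ::
    "nat \<Rightarrow> nat set \<Rightarrow> nat \<times> nat set \<Rightarrow> nat \<times> nat set \<Rightarrow> nat \<Rightarrow> nat \<Rightarrow> bool" where
  "distinct_neighbours_avoiding n A s t i j \<longleftrightarrow>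
     (\<forall>u w. u \<in> QJ_level n A i \<and> w \<in> QJ_level n A i \<and> u \<noteq> w \<longrightarrow>
        (\<exists>u' w'. u' \<in> QJ_level n A j \<and> w' \<in> QJ_level n A j \<and> u' \<noteq> w' \<and>
           u' \<notin> {s, t} \<and> w' \<notin> {s, t} \<and> QJ_adj n A u u' \<and> QJ_adj n A w w'))"

lemma distinct_neighbours_avoidingI:
  fixes N :: "nat set \<Rightarrow> nat set set"
  assumes large: "\<And>U. (i, U) \<in> QJ_level n A i \<Longrightarrow> finite (N U) \<and> 3 \<le> card (N U)"
    and inj: "\<And>U W. (i, U) \<in> QJ_level n A i \<Longrightarrow> (i, W) \<in> QJ_level n A i \<Longrightarrow> N U = N W \<Longrightarrow> U = W"
    and adj: "\<And>U V. (i, U) \<in> QJ_level n A i \<Longrightarrow> V \<in> N U \<Longrightarrow>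
                (j, V) \<in> QJ_level n A j \<and> QJ_adj n A (i, U) (j, V)"
  shows "distinct_neighbours_avoiding n A s t i j"
  unfolding distinct_neighbours_avoiding_def
proof (intro allI impI, elim conjE)
  fix u w assume u: "u \<in> QJ_level n A i" and w: "w \<in> QJ_level n A i" and "u \<noteq> w"
  then obtain U W where u_eq: "u = (i, U)" and w_eq: "w = (i, W)"
    by (auto simp: QJ_level_def)
  with u w have U: "(i, U) \<in> QJ_level n A i" and W: "(i, W) \<in> QJ_level n A i" by simp_all
  have inj_Pair: "inj (Pair j :: nat set \<Rightarrow> nat \<times> nat set)" by (rule injI) simp
  have "N U \<noteq> N W" using inj[OF U W] \<open>u \<noteq> w\<close> u_eq w_eq by auto
  then have neq: "Pair j ` N U \<noteq> Pair j ` N W" using inj_Pair by (simp add: inj_image_eq_iff)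
  have big: "finite (Pair j ` N X)" "3 \<le> card (Pair j ` N X)" if "(i, X) \<in> QJ_level n A i" for X
    using large[OF that] card_image[OF inj_on_subset[OF inj_Pair]] by simp_all
  obtain u' w' where u': "u' \<in> Pair j ` N U" and w': "w' \<in> Pair j ` N W"
      and avoid: "u' \<noteq> w'" "u' \<notin> {s, t}" "w' \<notin> {s, t}"
    using two_distinct_elements_avoiding[OF big(1)[OF U] big(1)[OF W] big(2)[OF U] big(2)[OF W] neq, of s t]
    by blast
  from u' adj[OF U] have "u' \<in> QJ_level n A j" "QJ_adj n A u u'" unfolding u_eq by blast+
  moreover from w' adj[OF W] have "w' \<in> QJ_level n A j" "QJ_adj n A w w'" unfolding w_eq by blast+
  ultimately show "\<exists>u' w'. u' \<in> QJ_level n A j \<and> w' \<in> QJ_level n A j \<and> u' \<noteq> w' \<and>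
      u' \<notin> {s, t} \<and> w' \<notin> {s, t} \<and> QJ_adj n A u u' \<and> QJ_adj n A w w'"
    using avoid by (intro exI[where x = u'] exI[where x = w']) simp
qed

lemma distinct_neighbours_avoiding_up:
  assumes "finite A" "1 \<le> i" "i < card A" "elemA A (i + 1) < n" "elemA A i + 3 \<le> n"
  shows "distinct_neighbours_avoiding n A s t i (i + 1)"
proof -
  have less: "elemA A i < elemA A (i + 1)" using elemA_strict_mono assms(1-3) by simp
  show ?thesis
  proof (rule distinct_neighbours_avoidingI
      [where N = "\<lambda>U. {V. V \<subseteq> {1..n} \<and> card V = elemA A (i + 1) \<and> U \<subseteq> V}"])
    fix U assume "(i, U) \<in> QJ_level n A i"
    then have U: "U \<subseteq> {1..n}" "card U = elemA A i" by (simp_all add: mem_QJ_level)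
    have "n - elemA A i \<le> (n - elemA A i) choose (elemA A (i + 1) - elemA A i)"
      using less assms(4) by (intro upper_le_binomial) auto
    with U less assms(5) show "finite {V. V \<subseteq> {1..n} \<and> card V = elemA A (i + 1) \<and> U \<subseteq> V} \<and>
        3 \<le> card {V. V \<subseteq> {1..n} \<and> card V = elemA A (i + 1) \<and> U \<subseteq> V}"
      by (simp add: card_supersets_of_card)
  next
    fix U W assume "(i, U) \<in> QJ_level n A i" "(i, W) \<in> QJ_level n A i"
      "{V. V \<subseteq> {1..n} \<and> card V = elemA A (i + 1) \<and> U \<subseteq> V} =
       {V. V \<subseteq> {1..n} \<and> card V = elemA A (i + 1) \<and> W \<subseteq> V}"
    with less assms(4) show "U = W"
      by (intro supersets_of_card_eq_imp_eq[of "{1..n}" U W "elemA A (i + 1)"])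
        (simp_all add: mem_QJ_level)
  next
    fix U V assume U: "(i, U) \<in> QJ_level n A i"
      and V: "V \<in> {V. V \<subseteq> {1..n} \<and> card V = elemA A (i + 1) \<and> U \<subseteq> V}"
    then have "(i + 1, V) \<in> QJ_level n A (i + 1)" using assms(3) by (simp add: mem_QJ_level)
    with U V show "(i + 1, V) \<in> QJ_level n A (i + 1) \<and> QJ_adj n A (i, U) (i + 1, V)"
      using QJ_adj_up[OF U] by blast
  qed
qed

lemma distinct_neighbours_avoiding_down:
  assumes "finite A" "1 < i" "i \<le> card A" "1 \<le> elemA A (i - 1)" "3 \<le> elemA A i"
  shows "distinct_neighbours_avoiding n A s t i (i - 1)"
proof -
  have less: "elemA A (i - 1) < elemA A i" using elemA_strict_mono assms(1-3) by simp
  show ?thesis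
  proof (rule distinct_neighbours_avoidingI[where N = "\<lambda>U. {V. V \<subseteq> U \<and> card V = elemA A (i - 1)}"])
    fix U assume "(i, U) \<in> QJ_level n A i"
    then have U: "finite U" "card U = elemA A i"
      by (auto simp: mem_QJ_level intro: finite_subset)
    have "elemA A i \<le> elemA A i choose elemA A (i - 1)"
      using less assms(4) by (intro upper_le_binomial) auto
    with U assms(5) show "finite {V. V \<subseteq> U \<and> card V = elemA A (i - 1)} \<and>
        3 \<le> card {V. V \<subseteq> U \<and> card V = elemA A (i - 1)}"
      by (simp add: n_subsets)
  next
    fix U W assume "(i, U) \<in> QJ_level n A i" "(i, W) \<in> QJ_level n A i"
      "{V. V \<subseteq> U \<and> card V = elemA A (i - 1)} = {V. V \<subseteq> W \<and> card V = elemA A (i - 1)}"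
    with less assms(4) show "U = W"
      by (intro subsets_of_card_eq_imp_eq[of W U "elemA A (i - 1)"])
        (auto simp: mem_QJ_level intro: finite_subset)
  next
    fix U V assume U: "(i, U) \<in> QJ_level n A i"
      and V: "V \<in> {V. V \<subseteq> U \<and> card V = elemA A (i - 1)}"
    then have "(i - 1, V) \<in> QJ_level n A (i - 1)" using assms(2) by (auto simp: mem_QJ_level)
    with V show "(i - 1, V) \<in> QJ_level n A (i - 1) \<and> QJ_adj n A (i, U) (i - 1, V)"
      using QJ_adj_down[OF assms(2) U] by blast
  qed
qed

theorem lemma5:
  fixes n :: nat and A :: "nat set" and s t :: "nat \<times> nat set"
  assumes "n \<ge> 4" and "A \<noteq> {}" and "A \<subseteq> {1..n}"
    and "s \<in> QJ_verts n A" and "t \<in> QJ_verts n A" and "s \<noteq> t"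
  shows
   "((\<forall>a\<in>A. 1 \<le> a \<and> a < n - 1) \<longrightarrow>
      (\<forall>i. 1 \<le> i \<and> i < card A \<longrightarrow>
        (\<forall>u w. u \<in> QJ_level n A i \<and> w \<in> QJ_level n A i \<and> u \<noteq> w \<longrightarrow>
          (\<exists>u' w'. u' \<in> QJ_level n A (i + 1) \<and> w' \<in> QJ_level n A (i + 1) \<and> u' \<noteq> w' \<and>
             u' \<notin> {s, t} \<and> w' \<notin> {s, t} \<and> QJ_adj n A u u' \<and> QJ_adj n A w w')))) \<and>
    ((\<forall>a\<in>A. 1 < a \<and> a \<le> n - 1) \<longrightarrow>
      (\<forall>i. 1 < i \<and> i \<le> card A \<longrightarrow>
        (\<forall>u w. u \<in> QJ_level n A i \<and> w \<in> QJ_level n A i \<and> u \<noteq> w \<longrightarrow>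
          (\<exists>u' w'. u' \<in> QJ_level n A (i - 1) \<and> w' \<in> QJ_level n A (i - 1) \<and> u' \<noteq> w' \<and>
             u' \<notin> {s, t} \<and> w' \<notin> {s, t} \<and> QJ_adj n A u u' \<and> QJ_adj n A w w')))) \<and>
    (A = {1, n - 1} \<longrightarrow>
      (\<forall>u w. u \<in> QJ_level n A 1 \<and> w \<in> QJ_level n A 1 \<and> u \<noteq> w \<longrightarrow>
          (\<exists>u' w'. u' \<in> QJ_level n A 2 \<and> w' \<in> QJ_level n A 2 \<and> u' \<noteq> w' \<and>
             u' \<notin> {s, t} \<and> w' \<notin> {s, t} \<and> QJ_adj n A u u' \<and> QJ_adj n A w w')) \<and>
      (\<forall>u w. u \<in> QJ_level n A 2 \<and> w \<in> QJ_level n A 2 \<and> u \<noteq> w \<longrightarrow>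
          (\<exists>u' w'. u' \<in> QJ_level n A 1 \<and> w' \<in> QJ_level n A 1 \<and> u' \<noteq> w' \<and>
             u' \<notin> {s, t} \<and> w' \<notin> {s, t} \<and> QJ_adj n A u u' \<and> QJ_adj n A w w')))"
proof -
  have fin: "finite A" using assms(3) finite_subset by blast
  have up: "distinct_neighbours_avoiding n A s t i (i + 1)"
    if "\<forall>a\<in>A. 1 \<le> a \<and> a < n - 1" "1 \<le> i" "i < card A" for i
    using that elemA_strict_mono[OF fin, of i "i + 1"] elemA_in[OF fin, of "i + 1"]
    by (intro distinct_neighbours_avoiding_up[OF fin]) auto
  have down: "distinct_neighbours_avoiding n A s t i (i - 1)"
    if "\<forall>a\<in>A. 1 < a \<and> a \<le> n - 1" "1 < i" "i \<le> card A" for i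
  proof (rule distinct_neighbours_avoiding_down[OF fin that(2,3)])
    have "1 < elemA A (i - 1)" "elemA A (i - 1) < elemA A i"
      using elemA_strict_mono[OF fin, of "i - 1" i] elemA_in[OF fin, of "i - 1"] that by auto
    then show "1 \<le> elemA A (i - 1)" "3 \<le> elemA A i" by linarith+
  qed
  have pair: "distinct_neighbours_avoiding n A s t 1 2 \<and> distinct_neighbours_avoiding n A s t 2 1"
    if "A = {1, n - 1}"
  proof -
    have "card A = 2" "elemA A 1 = 1" "elemA A 2 = n - 1"
      using that assms(1) by (simp_all add: elemA_def)
    then show ?thesis
      using distinct_neighbours_avoiding_up[OF fin, of 1 n] distinct_neighbours_avoiding_down[OF fin, of 2 n]
        assms(1) by (simp add: numeral_2_eq_2)
  qed
  show ?thesis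
    unfolding distinct_neighbours_avoiding_def[symmetric] using up down pair by simp
qed

end
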